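(* Let $0<\gamma<\frac12$, $0\le\delta\le1$, and let $m\ge2$ be an integer. Then $$F(1,\gamma,\delta)+F(m+1,\gamma)<F(2,\gamma)+F(m,\gamma).$$
   Context: Logarithms base 2; $h$ is binary entropy; $\|u\|$ is Hamming weight. For real $m\ge2$ and $\gamma\in(0,\frac12)$, $F(m,\gamma)=\min_{x\in(0,1)}\big[\log((1+x)^m+(1-x)^m)-m\gamma\log x-1\big]$. For an integer $m\ge1$, $\gamma\in(0,\frac12)$, $\delta\in[0,1]$, let $H^*(m,\gamma,\delta)$ be the maximum entropy of a probability distribution $Q$ on $\mathbb{F}_2^m$ with $\Pr_{u\sim Q}(u_i=1)=\gamma$ for all $i$ and $\Pr_{u\sim Q}(\|u\|\text{ odd})=\delta$; $F(m,\gamma,\delta)=H^*(m,\gamma,\delta)-h(\delta)$ if such $Q$ exists, and $-\infty$ otherwise. *)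

theory Defs
  imports "HOL-Analysis.Analysis" "HOL-Library.Extended_Real"
begin

definition xlogx :: "real \<Rightarrow> real" where
  "xlogx p = (if p = 0 then 0 else p * log 2 p)"

definition bin_entropy :: "real \<Rightarrow> real" where
  "bin_entropy d = - xlogx d - xlogx (1 - d)"

text \<open>Two-argument F(m,gamma) = min over x in (0,1) (written as an infimum).\<close>
definition F2 :: "real \<Rightarrow> real \<Rightarrow> real" where
  "F2 m g = Inf ((\<lambda>x. log 2 ((1 + x) powr m + (1 - x) powr m) - m * g * log 2 x - 1)
                 ` {0<..<1})"

text \<open>Vectors u in F_2^m are represented by their supports S \<subseteq> {..<m};
  u_i = 1 iff i \<in> S, and the Hamming weight is card S.\<close>
definition is_distr :: "nat \<Rightarrow> (nat set \<Rightarrow> real) \<Rightarrow> bool" where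
  "is_distr m Q \<longleftrightarrow> (\<forall>S\<in>Pow {..<m}. Q S \<ge> 0) \<and> (\<Sum>S\<in>Pow {..<m}. Q S) = 1"

definition entropy_distr :: "nat \<Rightarrow> (nat set \<Rightarrow> real) \<Rightarrow> real" where
  "entropy_distr m Q = - (\<Sum>S\<in>Pow {..<m}. xlogx (Q S))"

definition feasible :: "nat \<Rightarrow> real \<Rightarrow> real \<Rightarrow> (nat set \<Rightarrow> real) \<Rightarrow> bool" where
  "feasible m g d Q \<longleftrightarrow> is_distr m Q
     \<and> (\<forall>i<m. (\<Sum>S\<in>{S\<in>Pow {..<m}. i \<in> S}. Q S) = g)
     \<and> (\<Sum>S\<in>{S\<in>Pow {..<m}. odd (card S)}. Q S) = d"

text \<open>H*(m,gamma,delta): maximum entropy over feasible distributions (a compact set,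
  so the supremum is attained whenever it is nonempty).\<close>
definition Hstar :: "nat \<Rightarrow> real \<Rightarrow> real \<Rightarrow> real" where
  "Hstar m g d = Sup (entropy_distr m ` {Q. feasible m g d Q})"

definition F3 :: "nat \<Rightarrow> real \<Rightarrow> real \<Rightarrow> ereal" where
  "F3 m g d = (if \<exists>Q. feasible m g d Q then ereal (Hstar m g d - bin_entropy d) else -\<infinity>)"

end

theory Submission
  imports Defs
begin

text \<open>Substituting \<open>s = (1-x)/(1+x)\<close> turns the objective defining \<open>F(n,\<gamma>)\<close> into
  \<open>(ln (1 + s^n) + n D(s) + n h(\<gamma>) - ln 2) / ln 2\<close> (in nats), where \<open>D(s) \<ge> 0\<close> is a relative
  entropy vanishing at \<open>s\<^sub>0 = 1 - 2\<gamma>\<close>. For \<open>n \<ge> 2\<close> the bracket is nonincreasing below a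
  critical point \<open>s\<^sub>c \<le> s\<^sub>0\<close>, and above it \<open>u \<mapsto> D(e\<^sup>u)\<close> is convex. Interpolating
  geometrically between \<open>s \<ge> s\<^sub>c\<close> and \<open>s\<^sub>0\<close> with weights \<open>n/(n+1)\<close> and \<open>1/(n+1)\<close> gives a
  point where the \<open>(n+1)\<close>-bracket is at most \<open>ln (1 + s\<^sub>0 s^n) + n D(s)\<close>, which undercuts the
  \<open>n\<close>-bracket at \<open>s\<close> by a margin bounded away from \<open>0\<close>. Hence \<open>F(n+1,\<gamma>) < F(n,\<gamma>) + h(\<gamma>)\<close>,
  while \<open>F(2,\<gamma>) \<ge> h(\<gamma>)\<close> by Gibbs' inequality, and \<open>F(1,\<gamma>,\<delta>) \<le> 0\<close> because on \<open>\<bbbF>\<^sub>2\<close>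
  the parity constraint already determines the distribution.\<close>

definition entropy_ln :: "real \<Rightarrow> real" where
  "entropy_ln p = -(p * ln p + (1-p) * ln (1-p))"

definition rel_entropy :: "real \<Rightarrow> real \<Rightarrow> real" where
  "rel_entropy g s = - g * ln ((1-s)/2) - (1-g) * ln ((1+s)/2) - entropy_ln g"

definition reduced_objective :: "real \<Rightarrow> nat \<Rightarrow> real \<Rightarrow> real" where
  "reduced_objective g n s = ln (1 + s^n) + real n * rel_entropy g s"

definition F2_objective :: "real \<Rightarrow> real \<Rightarrow> real \<Rightarrow> real" where
  "F2_objective m g x = log 2 ((1 + x) powr m + (1 - x) powr m) - m * g * log 2 x - 1"

text \<open>The root in \<open>(0,1)\<close> of \<open>\<gamma> (1+s)\<^sup>2 = (1-\<gamma>) (1-s)\<^sup>2\<close>.\<close>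

definition s_crit :: "real \<Rightarrow> real" where
  "s_crit g = (sqrt (1-g) - sqrt g) / (sqrt (1-g) + sqrt g)"

lemma gibbs_inequality:
  assumes p: "0 < p" "p < 1" and q: "0 < q" "q < 1"
  shows "entropy_ln p \<le> -(p * ln q + (1-p) * ln (1-q))"
proof -
  have "p * ln (q/p) + (1-p) * ln ((1-q)/(1-p)) \<le> p * (q/p - 1) + (1-p) * ((1-q)/(1-p) - 1)"
    using p q by (intro add_mono mult_left_mono ln_le_minus_one) auto
  also have "\<dots> = 0"
    using p by (simp add: field_simps)
  finally show ?thesis
    using p q by (simp add: entropy_ln_def ln_div algebra_simps)
qed

lemma rel_entropy_nonneg:
  assumes "0 < g" "g < 1" "-1 < s" "s < 1"
  shows "0 \<le> rel_entropy g s"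
proof -
  have "entropy_ln g \<le> -(g * ln ((1-s)/2) + (1-g) * ln (1 - (1-s)/2))"
    using assms by (intro gibbs_inequality) auto
  also have "1 - (1-s)/2 = (1+s)/2"
    by (simp add: field_simps)
  finally show ?thesis
    unfolding rel_entropy_def by simp
qed

lemma rel_entropy_eq_0: "rel_entropy g (1 - 2*g) = 0"
proof -
  have "(1 - (1 - 2*g)) / 2 = g" "(1 + (1 - 2*g)) / 2 = 1 - g"
    by simp_all
  then show ?thesis
    unfolding rel_entropy_def entropy_ln_def by (simp only:)
qed

lemma rel_entropy_has_derivative:
  assumes "-1 < s" "s < 1"
  shows "(rel_entropy g has_real_derivative g/(1-s) - (1-g)/(1+s)) (at s)"
proof -
  have "((\<lambda>s. ln ((1-s)/2)) has_real_derivative -1/(1-s)) (at s)"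
    "((\<lambda>s. ln ((1+s)/2)) has_real_derivative 1/(1+s)) (at s)"
    using assms by (auto intro!: derivative_eq_intros simp: field_simps)
  from DERIV_diff[OF DERIV_diff[OF DERIV_cmult[OF this(1), where c="-g"]
      DERIV_cmult[OF this(2), where c="1-g"]] DERIV_const[where k="entropy_ln g"]]
  show ?thesis
    unfolding rel_entropy_def[abs_def] by simp
qed

lemma rel_entropy_substitution:
  assumes x: "0 < x" "x < 1"
  shows "rel_entropy g ((1-x)/(1+x)) = ln (1+x) - g * ln x - entropy_ln g"
proof -
  have "(1 - (1-x)/(1+x)) / 2 = x / (1+x)" "(1 + (1-x)/(1+x)) / 2 = 1 / (1+x)"
    using x by (simp_all add: field_simps)
  then show ?thesis
    unfolding rel_entropy_def using x by (simp only:) (simp add: ln_div algebra_simps)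
qed

lemma F2_objective_substitution:
  assumes x: "0 < x" "x < 1"
  shows "F2_objective (real n) g x
    = (reduced_objective g n ((1-x)/(1+x)) + real n * entropy_ln g - ln 2) / ln 2"
proof -
  have "(1+x)^n + (1-x)^n = (1+x)^n * (1 + ((1-x)/(1+x))^n)"
    using x by (simp add: field_simps)
  moreover have "0 < 1 + ((1-x)/(1+x))^n"
    using x by (simp add: add_pos_nonneg)
  ultimately have "ln ((1+x)^n + (1-x)^n) = real n * ln (1+x) + ln (1 + ((1-x)/(1+x))^n)"
    using x by (simp add: ln_mult ln_realpow)
  then show ?thesis
    using x by (simp add: F2_objective_def reduced_objective_def rel_entropy_substitution
        powr_realpow log_def field_simps)
qed

lemma s_crit_bounds:
  assumes g: "0 < g" "g < 1/2"
  shows "0 < s_crit g" "s_crit g < 1" "s_crit g \<le> 1 - 2*g"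
proof -
  define a where "a = sqrt g"
  define b where "b = sqrt (1-g)"
  have a: "0 < a" "a^2 = g" and b: "0 < b" "b^2 = 1-g" and ab: "a < b"
    using g by (auto simp: a_def b_def)
  have s: "s_crit g = (b-a) / (b+a)"
    by (simp add: s_crit_def a_def b_def)
  show "0 < s_crit g" "s_crit g < 1"
    using a b ab by (simp_all add: s)
  have "(b+a)^2 = 1 + 2*a*b"
    using a b by (simp add: power2_eq_square algebra_simps)
  then have "1 \<le> (b+a)^2"
    using a b by simp
  then have "(b-a) * 1 \<le> (b-a) * ((b+a) * (b+a))"
    using ab by (intro mult_left_mono) (auto simp: power2_eq_square)
  then have "(b-a) / (b+a) \<le> (b-a) * (b+a)"
    using a b by (simp add: divide_le_eq mult.assoc)
  also have "(b-a) * (b+a) = 1 - 2*g"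
    using a b by (simp add: power2_eq_square algebra_simps)
  finally show "s_crit g \<le> 1 - 2*g"
    by (simp add: s)
qed

lemma s_crit_le_imp:
  assumes g: "0 < g" "g < 1" and s: "s_crit g \<le> s" "s < 1"
  shows "(1-g) * (1-s)^2 \<le> g * (1+s)^2"
proof -
  define a where "a = sqrt g"
  define b where "b = sqrt (1-g)"
  have a: "0 < a" "a^2 = g" and b: "0 < b" "b^2 = 1-g"
    using g by (auto simp: a_def b_def)
  have "b - a \<le> s * (b+a)"
    using s a b by (simp add: s_crit_def a_def[symmetric] b_def[symmetric] divide_le_eq)
  then have "b * (1-s) \<le> a * (1+s)"
    by (simp add: algebra_simps)
  then have "(b * (1-s))^2 \<le> (a * (1+s))^2"
    using b s by (intro power_mono) auto
  then show ?thesis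
    using a b by (simp add: power_mult_distrib)
qed

lemma le_s_crit_imp:
  assumes g: "0 < g" "g < 1" and s: "0 < s" "s \<le> s_crit g"
  shows "g * (1+s)^2 \<le> (1-g) * (1-s)^2"
proof -
  define a where "a = sqrt g"
  define b where "b = sqrt (1-g)"
  have a: "0 < a" "a^2 = g" and b: "0 < b" "b^2 = 1-g"
    using g by (auto simp: a_def b_def)
  have "s * (b+a) \<le> b - a"
    using s a b by (simp add: s_crit_def a_def[symmetric] b_def[symmetric] le_divide_eq)
  then have "a * (1+s) \<le> b * (1-s)"
    by (simp add: algebra_simps)
  then have "(a * (1+s))^2 \<le> (b * (1-s))^2"
    using a s by (intro power_mono) auto
  then show ?thesis
    using a b by (simp add: power_mult_distrib)
qed

lemma rel_entropy_exp_deriv_mono: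
  assumes g: "0 < g" "g < 1/2" and s: "s_crit g \<le> s1" "s1 \<le> s2" "s2 < 1"
  shows "s1 * (g/(1-s1) - (1-g)/(1+s1)) \<le> s2 * (g/(1-s2) - (1-g)/(1+s2))"
proof (rule DERIV_nonneg_imp_nondecreasing[OF s(2)])
  fix x
  assume x: "s1 \<le> x" "x \<le> s2"
  then have x01: "0 < x" "x < 1"
    using s s_crit_bounds[OF g] by auto
  then have "1 - x \<noteq> 0" "1 + x \<noteq> 0"
    by auto
  then have "((\<lambda>s. s * (g/(1-s) - (1-g)/(1+s))) has_real_derivative g/(1-x)^2 - (1-g)/(1+x)^2) (at x)"
    by (auto intro!: derivative_eq_intros simp: field_simps power2_eq_square)
  moreover have "(1-g) * (1-x)^2 \<le> g * (1+x)^2"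
    using s_crit_le_imp[of g x] g s x by auto
  then have "(1-g)/(1+x)^2 \<le> g/(1-x)^2"
    using x01 by (auto simp: frac_le_eq intro!: divide_nonpos_pos)
  ultimately show "\<exists>y. ((\<lambda>s. s * (g/(1-s) - (1-g)/(1+s))) has_real_derivative y) (at x) \<and> 0 \<le> y"
    by auto
qed

lemma rel_entropy_exp_convex:
  assumes g: "0 < g" "g < 1/2"
  shows "convex_on {ln (s_crit g)..<0} (\<lambda>u. rel_entropy g (exp u))"
proof (rule convex_on_realI[where f'="\<lambda>u. exp u * (g/(1 - exp u) - (1-g)/(1 + exp u))"])
  fix u
  assume "u \<in> {ln (s_crit g)..<0}"
  then have "exp u < 1"
    by simp
  moreover have "-1 < exp u"
    using exp_gt_zero[of u] by linarith
  ultimately have "(rel_entropy g has_real_derivative g/(1 - exp u) - (1-g)/(1 + exp u)) (at (exp u))"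
    by (intro rel_entropy_has_derivative)
  from DERIV_chain2[OF this DERIV_exp]
  show "((\<lambda>u. rel_entropy g (exp u)) has_real_derivative
      exp u * (g/(1 - exp u) - (1-g)/(1 + exp u))) (at u)"
    by (simp only: mult.commute)
next
  fix u v
  assume u: "u \<in> {ln (s_crit g)..<0}" and v: "v \<in> {ln (s_crit g)..<0}" and "u \<le> v"
  have "s_crit g = exp (ln (s_crit g))"
    using s_crit_bounds[OF g] by simp
  also have "\<dots> \<le> exp u"
    using u by simp
  finally have "s_crit g \<le> exp u" .
  with \<open>u \<le> v\<close> v show "exp u * (g/(1 - exp u) - (1-g)/(1 + exp u))
      \<le> exp v * (g/(1 - exp v) - (1-g)/(1 + exp v))"
    by (intro rel_entropy_exp_deriv_mono[OF g]) auto
qed auto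

lemma power_ratio_le:
  fixes x :: real
  assumes n: "2 \<le> n" and x: "0 < x" "x \<le> 1"
  shows "x^(n-1) / (1 + x^n) \<le> x / (1 + x^2)"
proof -
  have "x^(n-1) \<le> x^1"
    using n x by (intro power_decreasing) auto
  moreover have "x^(n-1) * x^2 = x * x^n"
  proof -
    obtain k where "n = 2 + k"
      using le_Suc_ex[OF n] by blast
    then show ?thesis
      by (simp add: power_add power2_eq_square)
  qed
  ultimately have "x^(n-1) * (1 + x^2) \<le> x * (1 + x^n)"
    by (simp add: algebra_simps)
  then show ?thesis
    using x by (simp add: divide_simps add_pos_nonneg)
qed

lemma reduced_objective_antimono:
  assumes g: "0 < g" "g < 1/2" and n: "2 \<le> n" and s: "0 < s" "s \<le> s_crit g"
  shows "reduced_objective g n (s_crit g) \<le> reduced_objective g n s"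
proof (rule DERIV_nonpos_imp_nonincreasing[OF s(2)])
  fix x
  assume x: "s \<le> x" "x \<le> s_crit g"
  then have x01: "0 < x" "x < 1"
    using s s_crit_bounds[OF g] by auto
  have "(reduced_objective g n has_real_derivative
      real n * x^(n-1) / (1 + x^n) + real n * (g/(1-x) - (1-g)/(1+x))) (at x)"
    unfolding reduced_objective_def[abs_def] using x01
    by (auto intro!: derivative_eq_intros rel_entropy_has_derivative simp: add_pos_nonneg)
  moreover have "x^(n-1) / (1 + x^n) \<le> (1-g)/(1+x) - g/(1-x)"
  proof -
    have "g * (1+x)^2 \<le> (1-g) * (1-x)^2"
      using le_s_crit_imp[of g x] g x x01 by auto
    moreover have "((1-g)*(1-x) - g*(1+x)) * (1 + x^2) - x * ((1+x)*(1-x))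
        = (1-g) * (1-x)^2 - g * (1+x)^2"
      by algebra
    ultimately have "x / (1 + x^2) \<le> ((1-g)*(1-x) - g*(1+x)) / ((1+x)*(1-x))"
      using x01 by (simp add: divide_simps add_pos_nonneg)
    also have "\<dots> = (1-g)/(1+x) - g/(1-x)"
      using x01 by (simp add: field_simps)
    finally show ?thesis
      using power_ratio_le[OF n x01(1)] x01 by linarith
  qed
  then have "real n * x^(n-1) / (1 + x^n) + real n * (g/(1-x) - (1-g)/(1+x)) \<le> 0"
    using mult_left_mono[of _ _ "real n"] by (fastforce simp: algebra_simps)
  ultimately show "\<exists>y. (reduced_objective g n has_real_derivative y) (at x) \<and> y \<le> 0"
    by blast
qed

lemma reduced_objective_nonneg:
  assumes "0 < g" "g < 1" "0 < s" "s < 1"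
  shows "0 \<le> reduced_objective g n s"
  using rel_entropy_nonneg[of g s] assms by (simp add: reduced_objective_def)

lemma F2_eq_Inf: "F2 m g = Inf (F2_objective m g ` {0<..<1})"
  by (simp add: F2_def F2_objective_def[abs_def])

lemma F2_ge:
  assumes "\<And>x. 0 < x \<Longrightarrow> x < 1 \<Longrightarrow> c \<le> F2_objective m g x"
  shows "c \<le> F2 m g"
  unfolding F2_eq_Inf using assms by (intro cInf_greatest) auto

lemma F2_ge_reduced_objective:
  assumes "\<And>s. 0 < s \<Longrightarrow> s < 1 \<Longrightarrow> c \<le> reduced_objective g n s"
  shows "c + real n * entropy_ln g - ln 2 \<le> ln 2 * F2 (real n) g"
proof -
  have "(c + real n * entropy_ln g - ln 2) / ln 2 \<le> F2 (real n) g"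
  proof (rule F2_ge)
    fix x :: real
    assume "0 < x" "x < 1"
    then show "(c + real n * entropy_ln g - ln 2) / ln 2 \<le> F2_objective (real n) g x"
      using assms[of "(1-x)/(1+x)"]
      by (simp add: F2_objective_substitution divide_right_mono)
  qed
  then show ?thesis
    by (simp add: divide_le_eq mult.commute)
qed

lemma F2_le_reduced_objective:
  assumes g: "0 < g" "g < 1" and s: "0 < s" "s < 1"
  shows "ln 2 * F2 (real n) g \<le> reduced_objective g n s + real n * entropy_ln g - ln 2"
proof -
  define x where "x = (1-s)/(1+s)"
  have x: "0 < x" "x < 1" "(1-x)/(1+x) = s"
    using s by (auto simp: x_def field_simps)
  have "bdd_below (F2_objective (real n) g ` {0<..<1})"
  proof (rule bdd_belowI2)
    fix y :: real
    assume "y \<in> {0<..<1}"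
    then show "(real n * entropy_ln g - ln 2) / ln 2 \<le> F2_objective (real n) g y"
      using reduced_objective_nonneg[OF g, of "(1-y)/(1+y)" n]
      by (auto simp: F2_objective_substitution divide_right_mono)
  qed
  then have "F2 (real n) g \<le> F2_objective (real n) g x"
    unfolding F2_eq_Inf using x by (intro cInf_lower) auto
  then show ?thesis
    using x by (simp add: F2_objective_substitution le_divide_eq mult.commute)
qed

lemma reduced_objective_succ_le:
  assumes g: "0 < g" "g < 1/2" and s: "s_crit g \<le> s" "s < 1"
  obtains t where "0 < t" "t < 1"
    "reduced_objective g (n+1) t \<le> ln (1 + (1 - 2*g) * s^n) + real n * rel_entropy g s"
proof
  define s0 where "s0 = 1 - 2*g"
  define w where "w = 1 / (real n + 1)"
  \<comment> \<open>\<open>exp u = s^(n/(n+1)) s\<^sub>0^(1/(n+1))\<close>; convexity loses nothing at \<open>s\<^sub>0\<close>, where \<open>rel_entropy\<close> vanishes.\<close>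
  define u where "u = (1 - w) * ln s + w * ln s0"
  have s0: "s_crit g \<le> s0" "0 < s0" "s0 < 1"
    using s_crit_bounds[OF g] g by (auto simp: s0_def)
  have sc: "0 < s_crit g"
    using s_crit_bounds[OF g] by simp
  have w: "0 < w" "w \<le> 1"
    by (auto simp: w_def)
  have "ln s \<in> {ln (s_crit g)..<0}" "ln s0 \<in> {ln (s_crit g)..<0}"
    using s s0 sc by auto
  then have "rel_entropy g (exp u) \<le> (1 - w) * rel_entropy g (exp (ln s)) + w * rel_entropy g (exp (ln s0))"
    using convex_onD[OF rel_entropy_exp_convex[OF g], of w "ln s" "ln s0"] w by (simp add: u_def)
  also have "\<dots> = (1 - w) * rel_entropy g s"
    using s s0 sc by (simp add: s0_def rel_entropy_eq_0)
  finally have "real (n+1) * rel_entropy g (exp u) \<le> real n * rel_entropy g s"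
    by (simp add: w_def field_simps)
  moreover have "exp u ^ (n+1) = s0 * s^n"
  proof -
    have "real (n+1) * u = (real n + 1) * (1 - w) * ln s + (real n + 1) * w * ln s0"
      by (simp add: u_def algebra_simps)
    also have "(real n + 1) * (1 - w) = real n"
      by (simp add: w_def field_simps)
    also have "(real n + 1) * w = 1"
      by (simp add: w_def)
    finally have "real (n+1) * u = real n * ln s + ln s0"
      by simp
    then have "exp u ^ (n+1) = exp (real n * ln s + ln s0)"
      by (metis exp_of_nat_mult)
    also have "\<dots> = s0 * s^n"
      using s s0 sc by (simp add: exp_add exp_of_nat_mult)
    finally show ?thesis .
  qed
  ultimately show "reduced_objective g (n+1) (exp u) \<le> ln (1 + (1 - 2*g) * s^n) + real n * rel_entropy g s"
    by (simp add: reduced_objective_def s0_def)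
  have "(1 - w) * ln s \<le> 0" "w * ln s0 < 0"
    using w s s0 sc by (simp_all add: mult_nonneg_nonpos mult_pos_neg)
  then have "u < 0"
    by (simp add: u_def)
  then show "0 < exp u" "exp u < 1"
    by auto
qed

lemma ln_ratio_mono:
  fixes c y0 y :: real
  assumes c: "0 \<le> c" "c \<le> 1" and y: "0 \<le> y0" "y0 \<le> y"
  shows "ln (1 + y0) - ln (1 + c * y0) \<le> ln (1 + y) - ln (1 + c * y)"
proof -
  have "(1 + y) * (1 + c * y0) - (1 + y0) * (1 + c * y) = (1 - c) * (y - y0)"
    by algebra
  moreover have "0 \<le> (1 - c) * (y - y0)"
    using c y by simp
  ultimately have "(1 + y0) * (1 + c * y) - (1 + y) * (1 + c * y0) \<le> 0"
    by linarith
  moreover have pos: "0 < 1 + c * y0" "0 < 1 + c * y"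
    using c y by (simp_all add: add_pos_nonneg)
  ultimately have "(1 + y0) / (1 + c * y0) \<le> (1 + y) / (1 + c * y)"
    by (subst frac_le_eq) (auto intro!: divide_nonpos_pos)
  then have "ln ((1 + y0) / (1 + c * y0)) \<le> ln ((1 + y) / (1 + c * y))"
    using pos y by (subst ln_le_cancel_iff) auto
  then show ?thesis
    using pos y by (simp add: ln_div)
qed

lemma reduced_objective_gap:
  assumes g: "0 < g" "g < 1/2" and n: "2 \<le> n"
  obtains \<delta> where "0 < \<delta>"
    "\<And>s. 0 < s \<Longrightarrow> s < 1 \<Longrightarrow>
      \<exists>t. 0 < t \<and> t < 1 \<and> reduced_objective g (n+1) t + \<delta> \<le> reduced_objective g n s"
proof
  define sc where "sc = s_crit g"
  define s0 where "s0 = 1 - 2*g"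
  define \<delta> where "\<delta> = ln (1 + sc^n) - ln (1 + s0 * sc^n)"
  have sc: "0 < sc" "sc < 1" and s0: "0 < s0" "s0 < 1"
    using s_crit_bounds[OF g] g by (auto simp: sc_def s0_def)
  have "s0 * sc^n < sc^n"
    using sc s0 by simp
  then show "0 < \<delta>"
    using sc s0 by (simp add: \<delta>_def add_pos_nonneg)
  have above: "\<exists>t. 0 < t \<and> t < 1 \<and> reduced_objective g (n+1) t + \<delta> \<le> reduced_objective g n s"
    if s: "sc \<le> s" "s < 1" for s
  proof -
    obtain t where t: "0 < t" "t < 1"
      "reduced_objective g (n+1) t \<le> ln (1 + s0 * s^n) + real n * rel_entropy g s"
      using reduced_objective_succ_le[OF g] s by (auto simp: sc_def s0_def)
    have "\<delta> \<le> ln (1 + s^n) - ln (1 + s0 * s^n)"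
      unfolding \<delta>_def using s sc s0 by (intro ln_ratio_mono power_mono) auto
    then show ?thesis
      using t by (auto simp: reduced_objective_def)
  qed
  fix s :: real
  assume "0 < s" "s < 1"
  show "\<exists>t. 0 < t \<and> t < 1 \<and> reduced_objective g (n+1) t + \<delta> \<le> reduced_objective g n s"
  proof (cases "sc \<le> s")
    case True
    then show ?thesis
      using above \<open>s < 1\<close> by blast
  next
    case False
    then have "reduced_objective g n sc \<le> reduced_objective g n s"
      using reduced_objective_antimono[OF g n] \<open>0 < s\<close> by (simp add: sc_def)
    then show ?thesis
      using above[of sc] sc by force
  qed
qed

lemma F2_succ_lt:
  assumes g: "0 < g" "g < 1/2" and n: "2 \<le> n"
  shows "F2 (real (n+1)) g < F2 (real n) g + entropy_ln g / ln 2"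
proof -
  obtain \<delta> where \<delta>: "0 < \<delta>"
    "\<And>s. 0 < s \<Longrightarrow> s < 1 \<Longrightarrow>
      \<exists>t. 0 < t \<and> t < 1 \<and> reduced_objective g (n+1) t + \<delta> \<le> reduced_objective g n s"
    using reduced_objective_gap[OF g n] by blast
  define c where "c = ln 2 * F2 (real (n+1)) g - real (n+1) * entropy_ln g + ln 2"
  have "c + \<delta> \<le> reduced_objective g n s" if s: "0 < s" "s < 1" for s
  proof -
    obtain t where "0 < t" "t < 1" "reduced_objective g (n+1) t + \<delta> \<le> reduced_objective g n s"
      using \<delta>(2)[OF s] by blast
    moreover have "c \<le> reduced_objective g (n+1) t"
      using F2_le_reduced_objective[of g t "n+1"] g \<open>0 < t\<close> \<open>t < 1\<close> by (simp add: c_def)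
    ultimately show ?thesis
      by linarith
  qed
  then have "c + \<delta> + real n * entropy_ln g - ln 2 \<le> ln 2 * F2 (real n) g"
    by (rule F2_ge_reduced_objective)
  then have "ln 2 * F2 (real (n+1)) g < ln 2 * (F2 (real n) g + entropy_ln g / ln 2)"
    using \<delta>(1) by (simp add: c_def algebra_simps)
  then show ?thesis
    by simp
qed

lemma entropy_ln_le_F2_two:
  assumes g: "0 < g" "g < 1"
  shows "entropy_ln g / ln 2 \<le> F2 2 g"
proof (rule F2_ge)
  fix x :: real
  assume x: "0 < x" "x < 1"
  have "(1+x) powr 2 + (1-x) powr 2 = 2 * (1 + x^2)"
    using x by (simp add: powr_numeral power2_eq_square algebra_simps)
  then have "F2_objective 2 g x = log 2 (2 * (1 + x^2)) - 2 * g * log 2 x - 1"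
    by (simp only: F2_objective_def)
  also have "log 2 (2 * (1 + x^2)) = 1 + log 2 (1 + x^2)"
    using add_pos_nonneg[of 1 "x^2"] by (subst log_mult) auto
  also have "1 + log 2 (1 + x^2) - 2 * g * log 2 x - 1 = (ln (1 + x^2) - g * ln (x^2)) / ln 2"
    using x by (simp add: log_def ln_realpow field_simps)
  finally have "F2_objective 2 g x = (ln (1 + x^2) - g * ln (x^2)) / ln 2" .
  moreover have "entropy_ln g \<le> ln (1 + x^2) - g * ln (x^2)"
  proof -
    have y: "0 < x^2" "x^2 < 1"
      using x by (auto simp: power_less_one_iff)
    moreover have "0 < 1 + x^2"
      by (simp add: add_pos_nonneg)
    ultimately have "0 \<le> rel_entropy g ((1 - x^2) / (1 + x^2))"
      by (intro rel_entropy_nonneg[OF g]) (simp_all add: field_simps)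
    then show ?thesis
      using rel_entropy_substitution[OF y] by simp
  qed
  ultimately show "entropy_ln g / ln 2 \<le> F2_objective 2 g x"
    by (simp add: divide_right_mono)
qed

lemma entropy_distr_one:
  assumes "feasible 1 g d Q"
  shows "entropy_distr 1 Q = bin_entropy d"
proof -
  have "{..<1::nat} = {0}"
    by auto
  then have Pow1: "Pow {..<1::nat} = {{}, {0}}"
    by (simp add: Pow_insert insert_commute)
  have "{S \<in> Pow {..<1::nat}. odd (card S)} = {{0}}"
    unfolding Pow1 by auto
  then have "Q {0} = d" "Q {} + Q {0} = 1"
    using assms unfolding feasible_def is_distr_def Pow1 by simp_all
  then have "Q {0} = d" "Q {} = 1 - d"
    by simp_all
  then show ?thesis
    unfolding entropy_distr_def bin_entropy_def Pow1 by simp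
qed

lemma F3_one_le_0: "F3 1 g d \<le> 0"
proof (cases "\<exists>Q. feasible 1 g d Q")
  case True
  then have "Hstar 1 g d \<le> bin_entropy d"
    unfolding Hstar_def by (intro cSup_least) (use entropy_distr_one in auto)
  then show ?thesis
    using True by (simp add: F3_def)
qed (simp add: F3_def)

theorem mainTheorem18:
  fixes g d :: real and m :: nat
  assumes "0 < g" "g < 1/2" "0 \<le> d" "d \<le> 1" "m \<ge> 2"
  shows "F3 1 g d + ereal (F2 (real (m + 1)) g) < ereal (F2 2 g + F2 (real m) g)"
proof -
  have "F2 (real (m+1)) g < F2 (real m) g + entropy_ln g / ln 2"
    using F2_succ_lt assms by blast
  also have "\<dots> \<le> F2 2 g + F2 (real m) g"
    using entropy_ln_le_F2_two[of g] assms by simp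
  finally have F2_lt: "F2 (real (m+1)) g < F2 2 g + F2 (real m) g" .
  have "F3 1 g d + ereal (F2 (real (m+1)) g) \<le> ereal (F2 (real (m+1)) g)"
    using F3_one_le_0 add_right_mono[of "F3 1 g d" 0] by simp
  also have "\<dots> < ereal (F2 2 g + F2 (real m) g)"
    using F2_lt by simp
  finally show ?thesis .
qed

end
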